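(* The Max-Egal objective is strategyproof against a manipulator $m^+$ (one who can only add edges) over directed networks. That is, for every $k$, every directed social network $G$, every agent $m$ and every manipulation in which $m$ adds outgoing edges $(m,a)\notin E$ (yielding $G^m$), we have \[\min_{P\in O(G^m)} u(m,P)\le\min_{P\in O(G)} u(m,P)\quad\text{and}\quad \max_{P\in O(G^m)} u(m,P)\le\max_{P\in O(G)} u(m,P),\] where $O(\cdot)$ denotes the set of Max-Egal solutions and $u(m,P)$ is computed in the true network $G$.
   Context: Let $A=\{a_1,\dots,a_n\}$ be a finite nonempty set of agents and $G=\langle A,E\rangle$ a directed graph without self-loops (the social network); $N(a)=\{b:(a,b)\in E\}$. For a coalition $C\subseteq A$ with $a\in C$, $u(a,C)=|C\cap N(a)|$. For $0<k\le n$, $\Pi_k$ is the set of partitions of $A$ into exactly $k$ nonempty coalitions; for $P\in\Pi_k$, $u(a,P)=u(a,C)$ where $C\in P$ contains $a$. The Max-Egal objective: $O(G)$ is the set of $P\in\Pi_k$ maximizing $\min_{a\in A}u(a,P)$ (utilities computed in the network in question). A manipulator $m$ of type $m^+$ in a directed network may add only outgoing edges $(m,a)\notin E$; incoming edges cannot be changed, so $N^m(a)=N(a)$ for all $a\ne m$, where $N^m$ is the neighbourhood in the reported network $G^m$. The utility $u(m,P)$ of the manipulator is always computed with respect to his true neighbours in the original $G$. *)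

theory Defs
  imports "HOL-Library.Disjoint_Sets"
begin

definition digraph_on :: "'a set \<Rightarrow> ('a \<times> 'a) set \<Rightarrow> bool" where
  "digraph_on A E \<longleftrightarrow> E \<subseteq> A \<times> A \<and> (\<forall>a. (a, a) \<notin> E)"

definition nbrs :: "('a \<times> 'a) set \<Rightarrow> 'a \<Rightarrow> 'a set" where
  "nbrs E a = {b. (a, b) \<in> E}"

definition util_coal :: "('a \<times> 'a) set \<Rightarrow> 'a \<Rightarrow> 'a set \<Rightarrow> nat" where
  "util_coal E a C = card (C \<inter> nbrs E a)"

definition partitions_k :: "'a set \<Rightarrow> nat \<Rightarrow> 'a set set set" where
  "partitions_k A k = {P. partition_on A P \<and> card P = k}"

definition coal_of :: "'a set set \<Rightarrow> 'a \<Rightarrow> 'a set" where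
  "coal_of P a = (THE C. C \<in> P \<and> a \<in> C)"

definition util :: "('a \<times> 'a) set \<Rightarrow> 'a \<Rightarrow> 'a set set \<Rightarrow> nat" where
  "util E a P = util_coal E a (coal_of P a)"

definition egal :: "'a set \<Rightarrow> ('a \<times> 'a) set \<Rightarrow> 'a set set \<Rightarrow> nat" where
  "egal A E P = Min ((\<lambda>a. util E a P) ` A)"

definition max_egal :: "'a set \<Rightarrow> ('a \<times> 'a) set \<Rightarrow> nat \<Rightarrow> 'a set set set" where
  "max_egal A E k = {P \<in> partitions_k A k. \<forall>Q \<in> partitions_k A k. egal A E Q \<le> egal A E P}"

definition plus_manip :: "'a set \<Rightarrow> ('a \<times> 'a) set \<Rightarrow> 'a \<Rightarrow> ('a \<times> 'a) set \<Rightarrow> bool" where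
  "plus_manip A E m Em \<longleftrightarrow> digraph_on A Em \<and> E \<subseteq> Em \<and> (\<forall>(x, y) \<in> Em - E. x = m)"

end

theory Submission
  imports Defs
begin

text \<open>Adding edges out of \<open>m\<close> can only raise utilities, and only the utility of \<open>m\<close>
  itself. Hence the egalitarian value of a partition strictly increases only when \<open>m\<close> is a
  worst-off agent, i.e. when \<open>m\<close>'s true utility equals the true egalitarian value, which is at
  most the true optimum. A Max-Egal partition of the reported network is therefore either
  Max-Egal in the true network as well, or gives \<open>m\<close> no more than the true optimum, which
  every true Max-Egal partition guarantees him. If no reported optimum is raised, the two
  optima coincide and every true Max-Egal partition stays Max-Egal after the manipulation.\<close>

definition maximizers :: "'b set \<Rightarrow> ('b \<Rightarrow> 'c::linorder) \<Rightarrow> 'b set" where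
  "maximizers S f = {x \<in> S. \<forall>y\<in>S. f y \<le> f x}"

lemma maximizers_subset: "maximizers S f \<subseteq> S"
  unfolding maximizers_def by blast

lemma maximizers_nonempty:
  assumes "finite S" and "S \<noteq> {}"
  shows "maximizers S f \<noteq> {}"
proof -
  have "Max (f ` S) \<in> f ` S" using assms by (intro Max_in) auto
  then obtain x where "x \<in> S" and "f x = Max (f ` S)" by (auto elim!: imageE)
  then have "x \<in> maximizers S f"
    using assms(1) unfolding maximizers_def by auto
  then show ?thesis by blast
qed

text \<open>In the application \<open>obj\<close> and \<open>obj'\<close> are the egalitarian values in the true and the
  reported network, and \<open>u\<close> is the manipulator's true utility.\<close>

locale raised_objective =
  fixes S :: "'b set" and obj obj' u :: "'b \<Rightarrow> 'c::linorder"
  assumes finite_S: "finite S" and nonempty_S: "S \<noteq> {}"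
    and obj_le_obj': "x \<in> S \<Longrightarrow> obj x \<le> obj' x"
    and obj_le_u: "x \<in> S \<Longrightarrow> obj x \<le> u x"
    and u_le_obj_if_raised: "x \<in> S \<Longrightarrow> obj x < obj' x \<Longrightarrow> u x \<le> obj x"
begin

lemma finite_maximizers: "finite (maximizers S f)"
  using finite_subset[OF maximizers_subset finite_S] .

lemma raised_le_maximizer:
  assumes "x \<in> S" and "obj x < obj' x" and "y \<in> maximizers S obj"
  shows "u x \<le> u y"
proof -
  have "y \<in> S" and "obj x \<le> obj y"
    using assms(1,3) unfolding maximizers_def by auto
  have "u x \<le> obj x" using assms(1,2) by (rule u_le_obj_if_raised)
  also have "\<dots> \<le> obj y" by fact
  also have "\<dots> \<le> u y" using \<open>y \<in> S\<close> by (rule obj_le_u)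
  finally show ?thesis .
qed

lemma maximizer_if_not_raised:
  assumes "x \<in> maximizers S obj'" and "obj' x \<le> obj x"
  shows "x \<in> maximizers S obj"
proof -
  have "obj y \<le> obj x" if "y \<in> S" for y
  proof -
    have "obj y \<le> obj' y" using that by (rule obj_le_obj')
    also have "\<dots> \<le> obj' x" using assms(1) that by (simp add: maximizers_def)
    finally show ?thesis using assms(2) by simp
  qed
  then show ?thesis using assms(1) by (simp add: maximizers_def)
qed

lemma maximizers_subset_if_not_raised:
  assumes "x \<in> maximizers S obj'" and "obj' x \<le> obj x"
  shows "maximizers S obj \<subseteq> maximizers S obj'"
proof
  fix y assume y: "y \<in> maximizers S obj"
  have "y \<in> S" using y by (simp add: maximizers_def)
  have "x \<in> maximizers S obj" using assms by (rule maximizer_if_not_raised)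
  then have "obj x \<le> obj y" using y by (simp add: maximizers_def)
  have "obj' z \<le> obj' y" if "z \<in> S" for z
  proof -
    have "obj' z \<le> obj' x" using assms(1) that by (simp add: maximizers_def)
    also have "\<dots> \<le> obj x" by (fact assms(2))
    also have "\<dots> \<le> obj y" by fact
    also have "\<dots> \<le> obj' y" using \<open>y \<in> S\<close> by (rule obj_le_obj')
    finally show ?thesis .
  qed
  then show "y \<in> maximizers S obj'" using \<open>y \<in> S\<close> by (simp add: maximizers_def)
qed

lemma u_le_Max_maximizers: "x \<in> maximizers S f \<Longrightarrow> u x \<le> Max (u ` maximizers S f)"
  by (intro Max_ge finite_imageI finite_maximizers imageI)

lemma Min_maximizers_le_u: "x \<in> maximizers S f \<Longrightarrow> Min (u ` maximizers S f) \<le> u x"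
  by (intro Min_le finite_imageI finite_maximizers imageI)

lemma maximizers_not_empty: "maximizers S f \<noteq> {}"
  using finite_S nonempty_S by (rule maximizers_nonempty)

lemma Max_maximizers_le:
  "Max (u ` maximizers S obj') \<le> Max (u ` maximizers S obj)"
proof (rule Max.boundedI)
  show "finite (u ` maximizers S obj')" by (intro finite_imageI finite_maximizers)
  show "u ` maximizers S obj' \<noteq> {}" using maximizers_not_empty by simp
  fix v assume "v \<in> u ` maximizers S obj'"
  then obtain x where x: "x \<in> maximizers S obj'" and v: "v = u x" by (auto elim!: imageE)
  show "v \<le> Max (u ` maximizers S obj)"
  proof (cases "obj x < obj' x")
    case True
    obtain y where y: "y \<in> maximizers S obj" using maximizers_not_empty by auto
    have "u x \<le> u y" using subsetD[OF maximizers_subset x] True y by (rule raised_le_maximizer)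
    also have "\<dots> \<le> Max (u ` maximizers S obj)" using y by (rule u_le_Max_maximizers)
    finally show ?thesis unfolding v .
  next
    case False
    then have "x \<in> maximizers S obj" using x by (intro maximizer_if_not_raised) auto
    then show ?thesis unfolding v by (rule u_le_Max_maximizers)
  qed
qed

lemma Min_maximizers_le:
  "Min (u ` maximizers S obj') \<le> Min (u ` maximizers S obj)"
proof -
  obtain x where x: "x \<in> maximizers S obj'" using maximizers_not_empty by auto
  show ?thesis
  proof (cases "obj x < obj' x")
    case True
    have "Min (u ` maximizers S obj') \<le> u x" using x by (rule Min_maximizers_le_u)
    also have "\<dots> \<le> Min (u ` maximizers S obj)"
    proof (rule Min.boundedI)
      show "finite (u ` maximizers S obj)" by (intro finite_imageI finite_maximizers)
      show "u ` maximizers S obj \<noteq> {}" using maximizers_not_empty by simp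
      fix v assume "v \<in> u ` maximizers S obj"
      then obtain y where y: "y \<in> maximizers S obj" and v: "v = u y" by (auto elim!: imageE)
      show "u x \<le> v" unfolding v using subsetD[OF maximizers_subset x] True y
        by (rule raised_le_maximizer)
    qed
    finally show ?thesis .
  next
    case False
    then have "maximizers S obj \<subseteq> maximizers S obj'"
      using x by (intro maximizers_subset_if_not_raised) auto
    then show ?thesis
      using maximizers_not_empty by (intro Min_antimono image_mono finite_imageI finite_maximizers) auto
  qed
qed

end

lemma Min_image_less_imp_eq:
  assumes "finite A" and "\<And>a. a \<in> A \<Longrightarrow> a \<noteq> m \<Longrightarrow> f a = g a"
    and "Min (f ` A) < Min (g ` A)"
  shows "f m = Min (f ` A)"
proof -
  have "A \<noteq> {}" using assms(3) by auto
  then have "Min (f ` A) \<in> f ` A" using assms(1) by (intro Min_in) auto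
  then obtain a where a: "a \<in> A" "f a = Min (f ` A)" by (auto elim!: imageE)
  have "a = m"
  proof (rule ccontr)
    assume "a \<noteq> m"
    then have "Min (g ` A) \<le> f a" using a(1) assms(1,2) by simp
    then show False using a(2) assms(3) by simp
  qed
  then show ?thesis using a by simp
qed

lemma exists_partition_card:
  assumes "finite A" and "1 \<le> k" and "k \<le> card A"
  shows "\<exists>P. partition_on A P \<and> card P = k"
  using assms
proof (induction A arbitrary: k rule: finite_induct)
  case empty
  then show ?case by simp
next
  case (insert x B)
  show ?case
  proof (cases "k = 1")
    case True
    then show ?thesis
      by (intro exI[of _ "{insert x B}"]) (auto intro: partition_on_space)
  next
    case False
    then have "1 \<le> k - 1" and "k - 1 \<le> card B" using insert by auto
    then obtain P where P: "partition_on B P" "card P = k - 1" using insert.IH by blast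
    have "\<Union>P = B" using partition_onD1[OF P(1)] ..
    then have "{x} \<notin> P" using insert.hyps(2) by auto
    have "finite P" using P(2) \<open>1 \<le> k - 1\<close> by (intro card_ge_0_finite) simp
    have "partition_on (insert x B) (insert {x} P)"
      using \<open>\<Union>P = B\<close> insert.hyps(2) P(1)
      by (subst partition_on_insert) (auto simp: disjnt_iff)
    moreover have "card (insert {x} P) = k"
      using \<open>{x} \<notin> P\<close> \<open>finite P\<close> P(2) False insert.prems by simp
    ultimately show ?thesis by blast
  qed
qed

lemma finite_partitions_k: "finite A \<Longrightarrow> finite (partitions_k A k)"
  unfolding partitions_k_def by (rule finite_subset[OF _ finitely_many_partition_on]) auto

lemma partitions_k_nonempty:
  "finite A \<Longrightarrow> 0 < k \<Longrightarrow> k \<le> card A \<Longrightarrow> partitions_k A k \<noteq> {}"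
  using exists_partition_card[of A k] unfolding partitions_k_def by auto

lemma max_egal_eq_maximizers: "max_egal A E k = maximizers (partitions_k A k) (egal A E)"
  unfolding max_egal_def maximizers_def ..

lemma nbrs_plus_manip_other:
  "plus_manip A E m Em \<Longrightarrow> a \<noteq> m \<Longrightarrow> nbrs Em a = nbrs E a"
  unfolding plus_manip_def nbrs_def by blast

lemma util_le_plus_manip:
  assumes "finite A" and "plus_manip A E m Em"
  shows "util E a P \<le> util Em a P"
proof -
  have "nbrs Em a \<subseteq> A" and "E \<subseteq> Em"
    using assms(2) unfolding plus_manip_def digraph_on_def nbrs_def by auto
  have "finite (nbrs Em a)" using \<open>nbrs Em a \<subseteq> A\<close> assms(1) by (rule finite_subset)
  then have "finite (coal_of P a \<inter> nbrs Em a)" by simp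
  moreover have "coal_of P a \<inter> nbrs E a \<subseteq> coal_of P a \<inter> nbrs Em a"
    using \<open>E \<subseteq> Em\<close> unfolding nbrs_def by auto
  ultimately show ?thesis unfolding util_def util_coal_def by (rule card_mono)
qed

lemma egal_le_util: "finite A \<Longrightarrow> a \<in> A \<Longrightarrow> egal A E P \<le> util E a P"
  unfolding egal_def by simp

lemma egal_le_plus_manip:
  assumes "finite A" and "A \<noteq> {}" and "plus_manip A E m Em"
  shows "egal A E P \<le> egal A Em P"
proof -
  have "egal A E P \<le> util Em a P" if "a \<in> A" for a
    using egal_le_util[OF assms(1) that] util_le_plus_manip[OF assms(1,3)] by (rule order_trans)
  then show ?thesis unfolding egal_def[of A Em] using assms(1,2) by (intro Min.boundedI) auto
qed

lemma util_manipulator_eq_egal_if_egal_raised: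
  assumes "finite A" and "plus_manip A E m Em" and "egal A E P < egal A Em P"
  shows "util E m P = egal A E P"
proof -
  have "util E a P = util Em a P" if "a \<noteq> m" for a
    by (simp add: util_def util_coal_def nbrs_plus_manip_other[OF assms(2) that])
  then show ?thesis
    using Min_image_less_imp_eq[where f = "\<lambda>a. util E a P" and g = "\<lambda>a. util Em a P"] assms(1,3)
    unfolding egal_def by simp
qed

theorem theorem2:
  fixes A :: "'a set" and E Em :: "('a \<times> 'a) set" and m :: 'a and k :: nat
  assumes "finite A" and "A \<noteq> {}"
    and "digraph_on A E"
    and "0 < k" and "k \<le> card A"
    and "m \<in> A"
    and "plus_manip A E m Em"
  shows "Min ((\<lambda>P. util E m P) ` max_egal A Em k) \<le> Min ((\<lambda>P. util E m P) ` max_egal A E k)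
       \<and> Max ((\<lambda>P. util E m P) ` max_egal A Em k) \<le> Max ((\<lambda>P. util E m P) ` max_egal A E k)"
proof -
  interpret raised_objective "partitions_k A k" "egal A E" "egal A Em" "util E m"
  proof
    show "finite (partitions_k A k)" using assms(1) by (rule finite_partitions_k)
    show "partitions_k A k \<noteq> {}" using assms(1,4,5) by (rule partitions_k_nonempty)
    show "egal A E P \<le> egal A Em P" for P using assms(1,2,7) by (rule egal_le_plus_manip)
    show "egal A E P \<le> util E m P" for P using assms(1,6) by (rule egal_le_util)
    show "util E m P \<le> egal A E P" if "egal A E P < egal A Em P" for P
      using util_manipulator_eq_egal_if_egal_raised[OF assms(1,7) that] by simp
  qed
  show ?thesis
    using Min_maximizers_le Max_maximizers_le by (simp add: max_egal_eq_maximizers)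
qed

end
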